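(* Let $q$ be an odd prime power and $m\geq 2$. For each $1\leq i\leq m$ there exists a coset leader $S_i$ modulo $q^m-1$ with $w_q(S_i)=(q-1)m-i$. Moreover, for $1\leq i\leq m-1$, if $M_i$ and $M_{i+1}$ denote the largest coset leaders modulo $q^m-1$ with $w_q(M_i)=(q-1)m-i$ and $w_q(M_{i+1})=(q-1)m-(i+1)$ respectively, then $M_i>M_{i+1}$.
   Context: For $0\leq s\leq q^m-2$ with $q$-adic expansion $s=\sum_{j=0}^{m-1}s_jq^j$ ($0\leq s_j\leq q-1$), the $q$-weight is $w_q(s)=\sum_{j=0}^{m-1}s_j$. The $q$-cyclotomic coset of $s$ modulo $q^m-1$ is $\{s,sq,sq^2,\ldots\}\bmod(q^m-1)$; its smallest element is its coset leader, and "coset leader modulo $q^m-1$" means an integer equal to the coset leader of its own coset. *)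

theory Defs
  imports "HOL-Number_Theory.Number_Theory"
begin

definition qweight :: "nat \<Rightarrow> nat \<Rightarrow> nat \<Rightarrow> nat" where
  "qweight q m s = (\<Sum>j<m. (s div q ^ j) mod q)"

definition cyc_coset :: "nat \<Rightarrow> nat \<Rightarrow> nat \<Rightarrow> nat set" where
  "cyc_coset q m s = {(s * q ^ j) mod (q ^ m - 1) | j. True}"

definition coset_leader :: "nat \<Rightarrow> nat \<Rightarrow> nat \<Rightarrow> bool" where
  "coset_leader q m s \<longleftrightarrow> s \<le> q ^ m - 2 \<and> s = Min (cyc_coset q m s)"

end

theory Submission
  imports Defs
begin

text \<open>Multiplication by \<open>q\<close> modulo \<open>q^m - 1\<close> rotates the \<open>m\<close> base-\<open>q\<close> digits cyclically,
  so all elements of a cyclotomic coset have the same \<open>q\<close>-weight. If a coset leader \<open>s\<close> has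
  weight below \<open>(q - 1) m\<close>, some digit \<open>j\<close> of \<open>s\<close> is below \<open>q - 1\<close>, and \<open>s + q^j\<close> has weight
  one larger. Its coset leader is \<open>s q^t mod (q^m - 1) + q^k\<close>, where \<open>k\<close> is the rotated
  position of \<open>j\<close> (no carry occurs because the rotated digit is still below \<open>q - 1\<close>); as \<open>s\<close>
  is a leader, this exceeds \<open>s\<close>. Starting from the leader \<open>0\<close> this produces leaders of
  every weight below \<open>(q - 1) m\<close>, and applied to the largest leader of weight
  \<open>(q - 1) m - (i + 1)\<close> it gives a larger leader of weight \<open>(q - 1) m - i\<close>.\<close>

definition digit :: "nat \<Rightarrow> nat \<Rightarrow> nat \<Rightarrow> nat" where
  "digit q x j = x div q ^ j mod q"

lemma qweight_eq_sum_digit: "qweight q m x = (\<Sum>j<m. digit q x j)"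
  by (simp add: qweight_def digit_def)

lemma digit_less: "q > 0 \<Longrightarrow> digit q x j < q"
  by (simp add: digit_def)

lemma digit_Suc: "digit q x (Suc j) = digit q (x div q) j"
  by (simp add: digit_def div_mult2_eq)

lemma sum_mult_power_lessThan_Suc_shift:
  "(\<Sum>l<Suc m. e l * (q::nat) ^ l) = e 0 + q * (\<Sum>l<m. e (Suc l) * q ^ l)"
  unfolding sum.lessThan_Suc_shift by (simp add: sum_distrib_left mult_ac del: sum.lessThan_Suc)

lemma sum_mult_power_less:
  assumes "\<forall>l<m. e l < (q::nat)"
  shows "(\<Sum>l<m. e l * q ^ l) < q ^ m"
  using assms
proof (induction m arbitrary: e)
  case 0
  then show ?case by simp
next
  case (Suc m)
  have "(\<Sum>l<m. e (Suc l) * q ^ l) < q ^ m" and "e 0 < q"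
    using Suc by auto
  then have "e 0 + q * (\<Sum>l<m. e (Suc l) * q ^ l) < q + q * (q ^ m - 1)"
    by (intro add_less_le_mono mult_le_mono) auto
  then show ?case
    by (simp only: sum_mult_power_lessThan_Suc_shift) (simp add: algebra_simps)
qed

lemma digit_sum_mult_power:
  assumes "\<forall>l<m. e l < (q::nat)" and "k < m"
  shows "digit q (\<Sum>l<m. e l * q ^ l) k = e k"
  using assms
proof (induction m arbitrary: e k)
  case 0
  then show ?case by simp
next
  case (Suc m)
  let ?S = "\<Sum>l<m. e (Suc l) * q ^ l"
  have "e 0 < q" using Suc.prems by simp
  then have "(e 0 + q * ?S) mod q = e 0" and "(e 0 + q * ?S) div q = ?S"
    by auto
  then show ?case
    using Suc.IH[of "\<lambda>l. e (Suc l)"] Suc.prems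
    by (cases k) (simp_all only: sum_mult_power_lessThan_Suc_shift digit_Suc, auto simp: digit_def)
qed

lemma sum_digit_mult_power:
  assumes "x < (q::nat) ^ m"
  shows "x = (\<Sum>l<m. digit q x l * q ^ l)"
  using assms
proof (induction m arbitrary: x)
  case 0
  then show ?case by simp
next
  case (Suc m)
  then have "x div q < q ^ m"
    by (intro less_mult_imp_div_less) (simp add: mult.commute)
  with Suc.IH have "x div q = (\<Sum>l<m. digit q (x div q) l * q ^ l)" .
  then show ?case
    by (simp only: sum_mult_power_lessThan_Suc_shift digit_Suc) (simp add: digit_def)
qed

lemma sum_geometric_nat:
  assumes "(q::nat) > 0"
  shows "(\<Sum>l<m. (q - 1) * q ^ l) = q ^ m - 1"
proof (induction m)
  case 0
  then show ?case by simp
next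
  case (Suc m)
  have "q ^ m \<ge> 1" using assms by simp
  then show ?case using Suc assms by (simp add: algebra_simps diff_mult_distrib)
qed

lemma qweight_power_minus_one:
  assumes "(q::nat) > 0"
  shows "qweight q m (q ^ m - 1) = (q - 1) * m"
proof -
  have "digit q (q ^ m - 1) l = q - 1" if "l < m" for l
    using digit_sum_mult_power[of m "\<lambda>_. q - 1" q l] sum_geometric_nat[OF assms] assms that by simp
  then show ?thesis by (simp add: qweight_eq_sum_digit)
qed

lemma less_power_minus_one_if_qweight_less:
  assumes "x < (q::nat) ^ m" and "qweight q m x < (q - 1) * m" and "q > 0"
  shows "x < q ^ m - 1"
  using assms qweight_power_minus_one[of q m] by (cases "x = q ^ m - 1") auto

lemma ex_digit_less_if_qweight_less:
  assumes "qweight q m x < (q - 1) * m"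
  shows "\<exists>j<m. digit q x j < q - 1"
proof (rule ccontr)
  assume "\<not> ?thesis"
  then have "\<forall>j<m. q - 1 \<le> digit q x j" by auto
  then have "(\<Sum>j<m. q - 1) \<le> qweight q m x"
    unfolding qweight_eq_sum_digit by (intro sum_mono) simp
  with assms show False by (simp add: mult.commute)
qed

lemma add_power_no_carry:
  assumes "x < (q::nat) ^ m" and "j < m" and "digit q x j < q - 1"
  shows "x + q ^ j < q ^ m" and "qweight q m (x + q ^ j) = qweight q m x + 1"
proof -
  define e where "e l = digit q x l + (if l = j then 1 else 0)" for l
  have q: "q > 0" using assms(3) by simp
  have e_less: "\<forall>l<m. e l < q"
    using assms(3) digit_less[OF q, of x] by (auto simp: e_def)
  have "(\<Sum>l<m. e l * q ^ l) = (\<Sum>l<m. digit q x l * q ^ l + (if l = j then q ^ j else 0))"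
    by (intro sum.cong) (auto simp: e_def)
  then have x_e: "x + q ^ j = (\<Sum>l<m. e l * q ^ l)"
    using sum_digit_mult_power[OF assms(1)] assms(2) by (simp add: sum.distrib)
  then show "x + q ^ j < q ^ m"
    using sum_mult_power_less[OF e_less] by simp
  have "qweight q m (x + q ^ j) = (\<Sum>l<m. e l)"
    unfolding qweight_eq_sum_digit x_e using digit_sum_mult_power[OF e_less] by simp
  then show "qweight q m (x + q ^ j) = qweight q m x + 1"
    using assms(2) by (simp add: e_def sum.distrib qweight_eq_sum_digit)
qed

lemma digit_mod_power:
  assumes "k < r" and "(q::nat) > 0"
  shows "digit q (y mod q ^ r) k = digit q y k"
proof -
  have r: "q ^ r = q ^ k * q ^ (r - k)"
    using assms by (simp add: power_add[symmetric])
  have "(y mod q ^ r) div q ^ k = y div q ^ k mod q ^ (r - k)"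
    unfolding r mod_mult2_eq using assms by simp
  moreover have "q dvd q ^ (r - k)"
    using assms by simp
  ultimately show ?thesis
    unfolding digit_def by (simp add: mod_mod_cancel)
qed

lemma rotate_digits_less:
  fixes a b q P :: nat
  assumes "a < q" and "b < P" and "a * P + b < q * P - 1"
  shows "b * q + a < q * P - 1"
proof -
  \<comment> \<open>\<open>u\<close> and \<open>v\<close> are the complements of the digit blocks \<open>b\<close> and \<open>a\<close>; both numbers
    fall short of \<open>q P - 1\<close> unless \<open>u = v = 0\<close>.\<close>
  obtain u v where v: "q = a + v + 1" and u: "P = b + u + 1"
    using assms(1,2) by (metis add.commute less_natE plus_1_eq_Suc)
  have y: "a * P + b + (v * P + u) + 1 = q * P" and z: "b * q + a + (u * q + v) + 1 = q * P"
    unfolding u v by (simp_all add: algebra_simps)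
  have "u \<noteq> 0 \<or> v \<noteq> 0"
    using y assms(3) by auto
  then have "u * q + v > 0"
    using assms(1) by auto
  with z show ?thesis by linarith
qed

lemma mult_base_mod_power_minus_one:
  fixes q m y :: nat
  assumes m: "m \<ge> 1" and y: "y < q ^ m - 1"
  shows "y * q mod (q ^ m - 1) = y mod q ^ (m - 1) * q + y div q ^ (m - 1)"
proof -
  define P where "P = q ^ (m - 1)"
  define a where "a = y div P"
  define b where "b = y mod P"
  have qP: "q ^ m = q * P"
    using m by (simp add: P_def power_Suc[symmetric])
  have q: "q > 0"
    using y m by (cases "q = 0") (simp_all add: zero_power)
  have y_ab: "y = a * P + b"
    by (simp add: a_def b_def)
  have a: "a < q" and b: "b < P"
    using y q by (simp_all add: a_def b_def P_def qP div_less_iff_less_mult)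
  have "q * P \<ge> 1"
    using q b by simp
  then have "a * (q * P - 1) + a = a * (q * P)"
    by (metis add_mult_distrib2 le_add_diff_inverse2 nat_mult_1_right)
  then have "y * q = a * (q * P - 1) + (b * q + a)"
    by (simp add: y_ab algebra_simps)
  moreover have "b * q + a < q * P - 1"
    using rotate_digits_less[OF a b] y y_ab qP by simp
  ultimately show ?thesis
    by (simp add: qP a_def b_def P_def)
qed

lemma digit_mult_base_mod:
  fixes q m y :: nat
  assumes m: "m \<ge> 1" and y: "y < q ^ m - 1" and k: "k < m"
  shows "digit q (y * q mod (q ^ m - 1)) ((k + 1) mod m) = digit q y k"
proof -
  define a where "a = y div q ^ (m - 1)"
  define b where "b = y mod q ^ (m - 1)"
  have q: "q > 0"
    using y m by (cases "q = 0") (simp_all add: zero_power)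
  have "q ^ m = q * q ^ (m - 1)"
    using m by (simp add: power_Suc[symmetric])
  then have a: "a < q"
    using y by (simp add: a_def less_mult_imp_div_less)
  have z: "y * q mod (q ^ m - 1) = b * q + a"
    unfolding a_def b_def using mult_base_mod_power_minus_one[OF m y] .
  show ?thesis
  proof (cases "k + 1 < m")
    case True
    have "digit q (b * q + a) (Suc k) = digit q b k"
      unfolding digit_Suc using a by simp
    also have "\<dots> = digit q y k"
      unfolding b_def using True q by (intro digit_mod_power) auto
    finally show ?thesis
      using z True by simp
  next
    case False
    then have "k = m - 1"
      using k by simp
    then show ?thesis
      using z a False k by (simp add: digit_def a_def)
  qed
qed

lemma digit_mult_power_mod:
  fixes q m y :: nat
  assumes m: "m \<ge> 1" and y: "y < q ^ m - 1" and k: "k < m"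
  shows "digit q (y * q ^ t mod (q ^ m - 1)) ((k + t) mod m) = digit q y k"
proof (induction t)
  case 0
  then show ?case using y k by simp
next
  case (Suc t)
  have "y * q ^ Suc t mod (q ^ m - 1) = (y * q ^ t mod (q ^ m - 1)) * q mod (q ^ m - 1)"
    by (metis mod_mult_left_eq mult.assoc power_Suc2)
  moreover have "(k + Suc t) mod m = ((k + t) mod m + 1) mod m"
    by (simp add: mod_Suc_eq)
  moreover have "y * q ^ t mod (q ^ m - 1) < q ^ m - 1"
    using y by simp
  ultimately show ?case
    using digit_mult_base_mod[OF m, where y = "y * q ^ t mod (q ^ m - 1)" and k = "(k + t) mod m"] m Suc
    by simp
qed

lemma bij_betw_add_mod: "bij_betw (\<lambda>k. (k + t) mod m) {..<m} {..<(m::nat)}"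
proof -
  have "inj_on (\<lambda>k. (k + t) mod m) {..<m}"
  proof (rule inj_onI)
    fix k l
    assume "k \<in> {..<m}" "l \<in> {..<m}" "(k + t) mod m = (l + t) mod m"
    then show "k = l"
      using cong_add_rcancel_nat[of k t l m] by (simp add: cong_def)
  qed
  moreover have "(\<lambda>k. (k + t) mod m) ` {..<m} \<subseteq> {..<m}"
    by auto
  ultimately show ?thesis
    by (simp add: bij_betw_def endo_inj_surj)
qed

lemma qweight_mult_power_mod:
  fixes q m y :: nat
  assumes m: "m \<ge> 1" and y: "y < q ^ m - 1"
  shows "qweight q m (y * q ^ t mod (q ^ m - 1)) = qweight q m y"
proof -
  have "qweight q m (y * q ^ t mod (q ^ m - 1))
      = (\<Sum>k<m. digit q (y * q ^ t mod (q ^ m - 1)) ((k + t) mod m))"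
    unfolding qweight_eq_sum_digit by (rule sum.reindex_bij_betw[OF bij_betw_add_mod, symmetric])
  also have "\<dots> = qweight q m y"
    unfolding qweight_eq_sum_digit by (intro sum.cong refl digit_mult_power_mod[OF m y]) simp
  finally show ?thesis .
qed

lemma power_mod_power_minus_one:
  fixes q m k :: nat
  assumes q: "q \<ge> 2" and m: "m \<ge> 2"
  shows "q ^ k mod (q ^ m - 1) = q ^ (k mod m)"
proof -
  have "q ^ m = (q ^ m - 1) + 1"
    using q by simp
  then have "[q ^ m = 1] (mod q ^ m - 1)"
    by (metis cong_def mod_add_self1 add.commute)
  then have "[(q ^ m) ^ (k div m) * q ^ (k mod m) = 1 ^ (k div m) * q ^ (k mod m)] (mod q ^ m - 1)"
    by (intro cong_scalar_right cong_pow)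
  then have "[q ^ k = q ^ (k mod m)] (mod q ^ m - 1)"
    by (simp add: power_mult[symmetric] power_add[symmetric])
  moreover have "q ^ (k mod m) < q ^ m - 1"
  proof -
    have "k mod m \<le> m - 1"
      using mod_less_divisor[of m k] m by linarith
    then have "q ^ (k mod m) \<le> q ^ (m - 1)"
      using q by (intro power_increasing) auto
    moreover have "q ^ m = q * q ^ (m - 1)" and "q ^ (m - 1) \<ge> q"
      using q m by (simp_all add: power_Suc[symmetric] self_le_power)
    moreover have "2 * q ^ (m - 1) \<le> q * q ^ (m - 1)"
      using q by (intro mult_le_mono1)
    ultimately show ?thesis
      using q by linarith
  qed
  ultimately show ?thesis
    by (simp add: cong_def)
qed

lemma cyc_coset_subset:
  assumes "(q::nat) \<ge> 2" and "m \<ge> 1"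
  shows "cyc_coset q m x \<subseteq> {..<q ^ m - 1}"
proof -
  have "q ^ m \<ge> q"
    using assms by (simp add: self_le_power)
  then show ?thesis
    using assms by (auto simp: cyc_coset_def)
qed

lemma finite_cyc_coset:
  assumes "(q::nat) \<ge> 2" and "m \<ge> 1"
  shows "finite (cyc_coset q m x)"
  using cyc_coset_subset[OF assms] finite_subset by blast

lemma coset_leader_less:
  assumes "(q::nat) \<ge> 2" and "m \<ge> 1" and "coset_leader q m s"
  shows "s < q ^ m - 1"
proof -
  have "q ^ m \<ge> q"
    using assms by (simp add: self_le_power)
  then show ?thesis
    using assms unfolding coset_leader_def by linarith
qed

lemma coset_leader_le_mult_power_mod:
  assumes "(q::nat) \<ge> 2" and "m \<ge> 1" and "coset_leader q m s"
  shows "s \<le> s * q ^ t mod (q ^ m - 1)"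
proof -
  have "s * q ^ t mod (q ^ m - 1) \<in> cyc_coset q m s"
    unfolding cyc_coset_def by auto
  then show ?thesis
    using assms finite_cyc_coset[OF assms(1,2)] unfolding coset_leader_def by (metis Min_le)
qed

lemma coset_leader_zero: "coset_leader q m 0"
  by (simp add: coset_leader_def cyc_coset_def)

lemma Min_cyc_coset:
  assumes "(q::nat) \<ge> 2" and "m \<ge> 1"
  obtains t where "Min (cyc_coset q m x) = x * q ^ t mod (q ^ m - 1)"
proof -
  have "cyc_coset q m x \<noteq> {}"
    unfolding cyc_coset_def by auto
  then have "Min (cyc_coset q m x) \<in> cyc_coset q m x"
    using Min_in[OF finite_cyc_coset[OF assms]] by blast
  then show ?thesis
    using that unfolding cyc_coset_def by auto
qed

lemma cyc_coset_mult_power_mod_subset: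
  "cyc_coset q m (x * q ^ t mod (q ^ m - 1)) \<subseteq> cyc_coset q m x"
proof
  fix z
  assume "z \<in> cyc_coset q m (x * q ^ t mod (q ^ m - 1))"
  then obtain j where "z = x * q ^ t mod (q ^ m - 1) * q ^ j mod (q ^ m - 1)"
    unfolding cyc_coset_def by auto
  then have "z = x * q ^ (t + j) mod (q ^ m - 1)"
    by (simp add: mod_mult_left_eq power_add mult.assoc)
  then show "z \<in> cyc_coset q m x"
    unfolding cyc_coset_def by blast
qed

lemma coset_leader_Min_cyc_coset:
  assumes q: "(q::nat) \<ge> 2" and m: "m \<ge> 1"
  shows "coset_leader q m (Min (cyc_coset q m x))"
proof -
  let ?L = "Min (cyc_coset q m x)"
  obtain t where t: "?L = x * q ^ t mod (q ^ m - 1)"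
    using Min_cyc_coset[OF q m] .
  have "?L \<in> cyc_coset q m x"
    using Min_in[OF finite_cyc_coset[OF q m]] by (auto simp: cyc_coset_def)
  then have L_less: "?L < q ^ m - 1"
    using cyc_coset_subset[OF q m] by blast
  then have L_in: "?L \<in> cyc_coset q m ?L"
    unfolding cyc_coset_def by (auto intro: exI[of _ 0])
  have "cyc_coset q m ?L \<subseteq> cyc_coset q m x"
    unfolding t by (rule cyc_coset_mult_power_mod_subset)
  then have "?L \<le> Min (cyc_coset q m ?L)"
    using L_in finite_cyc_coset[OF q m] by (intro Min_antimono) auto
  moreover have "Min (cyc_coset q m ?L) \<le> ?L"
    using finite_cyc_coset[OF q m] L_in by (rule Min_le)
  ultimately show ?thesis
    using L_less unfolding coset_leader_def by simp
qed

lemma coset_leader_qweight_Suc: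
  fixes q m s :: nat
  assumes q: "q \<ge> 2" and m: "m \<ge> 2"
    and s: "coset_leader q m s" and w: "qweight q m s + 1 < (q - 1) * m"
  obtains L where "coset_leader q m L" and "qweight q m L = qweight q m s + 1" and "s < L"
proof -
  let ?n = "q ^ m - 1"
  have m1: "m \<ge> 1" using m by simp
  have s_less: "s < ?n"
    using coset_leader_less[OF q m1 s] .
  have "qweight q m s < (q - 1) * m"
    using w by simp
  then obtain j where j: "j < m" "digit q s j < q - 1"
    using ex_digit_less_if_qweight_less by blast
  define x where "x = s + q ^ j"
  have "x < q ^ m" and wx: "qweight q m x = qweight q m s + 1"
    using add_power_no_carry[OF _ j] s_less by (simp_all add: x_def)
  then have x_less: "x < ?n"
    using less_power_minus_one_if_qweight_less q w by simp
  obtain t where t: "Min (cyc_coset q m x) = x * q ^ t mod ?n"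
    using Min_cyc_coset[OF q m1] .
  define A where "A = s * q ^ t mod ?n"
  define k where "k = (j + t) mod m"
  have "A < ?n"
    using s_less by (simp add: A_def)
  then have "A < q ^ m" by linarith
  moreover have "k < m"
    using m by (simp add: k_def)
  moreover have "digit q A k < q - 1"
    using digit_mult_power_mod[OF m1 s_less j(1)] j(2) by (simp add: A_def k_def)
  ultimately have "A + q ^ k < q ^ m" and "qweight q m (A + q ^ k) = qweight q m A + 1"
    using add_power_no_carry by blast+
  moreover have "qweight q m A = qweight q m s"
    unfolding A_def using qweight_mult_power_mod[OF m1 s_less] .
  ultimately have Ak_less: "A + q ^ k < ?n"
    using less_power_minus_one_if_qweight_less q w by simp
  have "x * q ^ t mod ?n = (A + q ^ (j + t) mod ?n) mod ?n"
    by (simp add: x_def A_def algebra_simps power_add mod_add_eq)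
  also have "q ^ (j + t) mod ?n = q ^ k"
    unfolding k_def by (rule power_mod_power_minus_one[OF q m])
  also have "(A + q ^ k) mod ?n = A + q ^ k"
    using Ak_less by simp
  finally have L: "Min (cyc_coset q m x) = A + q ^ k"
    using t by simp
  show ?thesis
  proof
    show "coset_leader q m (Min (cyc_coset q m x))"
      using coset_leader_Min_cyc_coset[OF q m1] .
    show "qweight q m (Min (cyc_coset q m x)) = qweight q m s + 1"
      using t qweight_mult_power_mod[OF m1 x_less] wx by simp
    have "s \<le> A"
      unfolding A_def using coset_leader_le_mult_power_mod[OF q m1 s] .
    moreover have "q ^ k > 0"
      using q by simp
    ultimately show "s < Min (cyc_coset q m x)"
      unfolding L by linarith
  qed
qed

lemma ex_coset_leader_qweight:
  fixes q m w :: nat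
  assumes q: "q \<ge> 2" and m: "m \<ge> 2" and w: "w < (q - 1) * m"
  shows "\<exists>S. coset_leader q m S \<and> qweight q m S = w"
  using w
proof (induction w)
  case 0
  show ?case
    using coset_leader_zero[of q m] by (intro exI[of _ 0]) (simp add: qweight_def)
next
  case (Suc w)
  then obtain S where S: "coset_leader q m S" and S_weight: "qweight q m S = w"
    by auto
  then have "qweight q m S + 1 < (q - 1) * m"
    using Suc.prems by simp
  then obtain L where "coset_leader q m L" "qweight q m L = qweight q m S + 1"
    by (rule coset_leader_qweight_Suc[OF q m S])
  then show ?case
    using S_weight by auto
qed

lemma finite_coset_leaders:
  "finite {s. coset_leader q m s \<and> P s}"
  by (rule finite_subset[of _ "{..q ^ m - 2}"]) (auto simp: coset_leader_def)

lemma Max_coset_leaders_qweight_less: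
  fixes q m w :: nat
  assumes q: "q \<ge> 2" and m: "m \<ge> 2" and w: "w + 1 < (q - 1) * m"
  shows "Max {s. coset_leader q m s \<and> qweight q m s = w}
       < Max {s. coset_leader q m s \<and> qweight q m s = w + 1}"
proof -
  let ?M = "Max {s. coset_leader q m s \<and> qweight q m s = w}"
  have "{s. coset_leader q m s \<and> qweight q m s = w} \<noteq> {}"
    using ex_coset_leader_qweight[OF q m] w by simp
  then have "?M \<in> {s. coset_leader q m s \<and> qweight q m s = w}"
    using finite_coset_leaders by (rule Max_in[rotated])
  then have M: "coset_leader q m ?M" and M_weight: "qweight q m ?M = w"
    by auto
  then have "qweight q m ?M + 1 < (q - 1) * m"
    using w by simp
  then obtain L where "coset_leader q m L" "qweight q m L = qweight q m ?M + 1" "?M < L"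
    by (rule coset_leader_qweight_Suc[OF q m M])
  moreover have "L \<le> Max {s. coset_leader q m s \<and> qweight q m s = w + 1}"
    using calculation M_weight by (intro Max_ge[OF finite_coset_leaders]) simp
  ultimately show ?thesis
    by linarith
qed

theorem lemma17:
  fixes q m :: nat
  assumes "primepow q" and "odd q" and "m \<ge> 2"
  shows "(\<forall>i\<in>{1..m}. \<exists>S. coset_leader q m S \<and> qweight q m S = (q - 1) * m - i)
       \<and> (\<forall>i\<in>{1..m-1}.
            Max {s. coset_leader q m s \<and> qweight q m s = (q - 1) * m - i}
          > Max {s. coset_leader q m s \<and> qweight q m s = (q - 1) * m - (i + 1)})"
proof -
  have q: "q \<ge> 2"
    using primepow_gt_Suc_0[OF assms(1)] by simp
  have m: "m \<ge> 2" by fact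
  have "1 \<le> q - 1"
    using q by linarith
  then have m_le: "m \<le> (q - 1) * m"
    using mult_le_mono1 by fastforce
  have "\<forall>i\<in>{1..m}. \<exists>S. coset_leader q m S \<and> qweight q m S = (q - 1) * m - i"
  proof
    fix i
    assume "i \<in> {1..m}"
    then have "1 \<le> i" and "i \<le> m"
      by auto
    then have "(q - 1) * m - i < (q - 1) * m"
      using m_le by linarith
    then show "\<exists>S. coset_leader q m S \<and> qweight q m S = (q - 1) * m - i"
      by (rule ex_coset_leader_qweight[OF q m])
  qed
  moreover have "\<forall>i\<in>{1..m-1}.
            Max {s. coset_leader q m s \<and> qweight q m s = (q - 1) * m - i}
          > Max {s. coset_leader q m s \<and> qweight q m s = (q - 1) * m - (i + 1)}"
  proof
    fix i
    assume "i \<in> {1..m-1}"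
    then have "1 \<le> i" and "i + 1 \<le> m"
      by auto
    then have weight_less: "(q - 1) * m - (i + 1) + 1 < (q - 1) * m"
      and weight_eq: "(q - 1) * m - (i + 1) + 1 = (q - 1) * m - i"
      using m_le by linarith+
    show "Max {s. coset_leader q m s \<and> qweight q m s = (q - 1) * m - i}
          > Max {s. coset_leader q m s \<and> qweight q m s = (q - 1) * m - (i + 1)}"
      using Max_coset_leaders_qweight_less[OF q m weight_less] unfolding weight_eq .
  qed
  ultimately show ?thesis ..
qed

end
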